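(* Let $G=(S,R,\rho)$ be a $q$-grammar such that $R(s_{i+1})=q\uparrow R(s_i)$ for every $s_i\in\mathbb{S}$, let $\hat G=(S,R,\mathrm{KSO})$, and let $\phi$ be a master-linear evaluation. Then for every $f\in\mathbb{E}$, \[ \phi\big(\mathrm{Gen}^{(G)}_q(f;u)\big)=\phi\big(\mathrm{Gen}^{(\hat G)}_q(f;u)\big). \]
   Context: $\mathbb{K}$ is a commutative ring with unity and characteristic zero, $q$ an indeterminate. For a set $S$ of master variables, $\mathbb{S}=\{s_i:s\in S,\ i\ge0\}$ is a set of non-commuting variables, $F(\mathbb{S})$ the free group on $\mathbb{S}$, $\mathbb{E}=\mathbb{K}[q][F(\mathbb{S})]$ its group algebra. A rule $R$ assigns to each $s_i$ an element $R(s_i)\in\mathbb{E}$, extended by $R(s_i^{-1})=-s_i^{-1}R(s_i)s_{i+1}^{-1}$. The up-arrow $\uparrow$ is the $\mathbb{K}[q]$-linear map replacing each letter $s_i^{\pm1}$ of a word by $s_{i+1}^{\pm1}$. An order $\rho$ is a map rewriting each word by permuting its letters, extended linearly; KSO is the identity. The $q$-derivative of a $q$-grammar $(S,R,\rho)$ is the $\mathbb{K}[q]$-linear map with $D(w_1\cdots w_n)=\sum_{j=1}^n\rho\big(w_1\cdots w_{j-1}R(w_j)\uparrow(w_{j+1}\cdots w_n)\big)$ for letters $w_j$, $D^0=\mathrm{id}$, $D^k=D\circ D^{k-1}$. $\mathrm{Gen}^{(G)}_q(f;u)=\sum_{n\ge0}D^n(f)u^n/(q;q)_n$, $(q;q)_n=\prod_{i=1}^n(1-q^i)$.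 An evaluation is a map from $\mathbb{S}$ to a commutative ring containing $\mathbb{K}[q]$, extended to a $\mathbb{K}[q]$-linear ring morphism on $\mathbb{E}$ with $\phi(s_i^{-1})=\phi(s_i)^{-1}$ and applied coefficientwise; it is master-linear if $\phi(s_i)=\phi(s_j)$ for every $s\in S$ and all $i,j$. *)

theory Defs
  imports "HOL-Library.Multiset" "HOL-Computational_Algebra.Polynomial"
begin

text \<open>Letters of the free group F(S): (True,(s,i)) is s_i, (False,(s,i)) is s_i^{-1}.\<close>
type_synonym 's lett = "bool \<times> ('s \<times> nat)"
type_synonym 's word = "'s lett list"

text \<open>Elements of E = K[q][F(S)]: coefficient functions on reduced words with finite support.\<close>
type_synonym ('s, 'k) elt = "'s word \<Rightarrow> 'k poly"

definition inv_lett :: "'s lett \<Rightarrow> 's lett" where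
  "inv_lett l = (\<not> fst l, snd l)"

fun red :: "'s word \<Rightarrow> 's word" where
  "red [] = []"
| "red (x # xs) = (case red xs of [] \<Rightarrow> [x]
                    | y # ys \<Rightarrow> (if y = inv_lett x then ys else x # y # ys))"

definition reduced :: "'s word \<Rightarrow> bool" where
  "reduced w \<longleftrightarrow> red w = w"

definition supp :: "('s, 'k::zero) elt \<Rightarrow> 's word set" where
  "supp x = {w. x w \<noteq> 0}"

definition in_E :: "('s, 'k::zero) elt \<Rightarrow> bool" where
  "in_E x \<longleftrightarrow> finite (supp x) \<and> (\<forall>w\<in>supp x. reduced w)"

definition mono :: "'s word \<Rightarrow> ('s, 'k::comm_ring_1) elt" where
  "mono w = (\<lambda>v. if v = red w then 1 else 0)"

definition ext :: "('s word \<Rightarrow> ('s, 'k::comm_ring_1) elt) \<Rightarrow> ('s, 'k) elt \<Rightarrow> ('s, 'k) elt" where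
  "ext F x = (\<lambda>v. \<Sum>w\<in>supp x. x w * F w v)"

definition mul :: "('s, 'k::comm_ring_1) elt \<Rightarrow> ('s, 'k) elt \<Rightarrow> ('s, 'k) elt" where
  "mul x y = (\<lambda>v. \<Sum>p\<in>{(a, b). a \<in> supp x \<and> b \<in> supp y \<and> red (a @ b) = v}.
                    x (fst p) * y (snd p))"

definition smul :: "'k::comm_ring_1 poly \<Rightarrow> ('s, 'k) elt \<Rightarrow> ('s, 'k) elt" where
  "smul c x = (\<lambda>v. c * x v)"

definition up_l :: "'s lett \<Rightarrow> 's lett" where
  "up_l l = (fst l, (fst (snd l), Suc (snd (snd l))))"

definition upE :: "('s, 'k::comm_ring_1) elt \<Rightarrow> ('s, 'k) elt" where
  "upE x = ext (\<lambda>w. mono (map up_l w)) x"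

text \<open>Rule R (given on the positive letters s_i) extended to inverse letters:
  R(s_i^{-1}) = - s_i^{-1} R(s_i) s_{i+1}^{-1}.\<close>
definition Rl :: "('s \<times> nat \<Rightarrow> ('s, 'k::comm_ring_1) elt) \<Rightarrow> 's lett \<Rightarrow> ('s, 'k) elt" where
  "Rl R l = (if fst l then R (snd l)
             else (\<lambda>v. - mul (mul (mono [(False, snd l)]) (R (snd l)))
                           (mono [(False, (fst (snd l), Suc (snd (snd l))))]) v))"

definition rhoE :: "('s word \<Rightarrow> 's word) \<Rightarrow> ('s, 'k::comm_ring_1) elt \<Rightarrow> ('s, 'k) elt" where
  "rhoE \<rho> x = ext (\<lambda>w. mono (\<rho> w)) x"

definition is_order :: "('s word \<Rightarrow> 's word) \<Rightarrow> bool" where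
  "is_order \<rho> \<longleftrightarrow> (\<forall>w. reduced w \<longrightarrow> mset (\<rho> w) = mset w)"

definition KSO :: "'s word \<Rightarrow> 's word" where
  "KSO = id"

definition qD :: "('s \<times> nat \<Rightarrow> ('s, 'k::comm_ring_1) elt) \<Rightarrow> ('s word \<Rightarrow> 's word)
                 \<Rightarrow> ('s, 'k) elt \<Rightarrow> ('s, 'k) elt" where
  "qD R \<rho> x = ext (\<lambda>w. (\<lambda>v. \<Sum>j<length w.
        rhoE \<rho> (mul (mul (mono (take j w)) (Rl R (w ! j)))
                      (upE (mono (drop (Suc j) w)))) v)) x"

definition qpoch :: "nat \<Rightarrow> 'k::comm_ring_1 poly" where
  "qpoch n = (\<Prod>i\<in>{1..n}. 1 - monom 1 i)"

text \<open>Gen_q(f;u) = sum_n D^n(f) u^n/(q;q)_n, represented as the sequence of its terms: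
  the n-th entry (D^n f, (q;q)_n) stands for the term D^n(f) u^n / (q;q)_n.\<close>
definition Gen :: "('s \<times> nat \<Rightarrow> ('s, 'k::comm_ring_1) elt) \<Rightarrow> ('s word \<Rightarrow> 's word)
                 \<Rightarrow> ('s, 'k) elt \<Rightarrow> nat \<Rightarrow> ('s, 'k) elt \<times> 'k poly" where
  "Gen R \<rho> f n = ((qD R \<rho> ^^ n) f, qpoch n)"

text \<open>Evaluations: phi on S-variables with values in a commutative ring B containing K[q]
  via the ring embedding iota; phi(s_i) must be invertible.\<close>
definition is_evaluation :: "('k::comm_ring_1 poly \<Rightarrow> 'b::comm_ring_1) \<Rightarrow> ('s \<times> nat \<Rightarrow> 'b) \<Rightarrow> bool" where
  "is_evaluation \<iota> \<phi> \<longleftrightarrow> inj \<iota> \<and> \<iota> 1 = 1 \<and> (\<forall>a b. \<iota> (a + b) = \<iota> a + \<iota> b)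
      \<and> (\<forall>a b. \<iota> (a * b) = \<iota> a * \<iota> b) \<and> (\<forall>x. \<exists>y. \<phi> x * y = 1)"

definition master_linear :: "('s \<times> nat \<Rightarrow> 'b) \<Rightarrow> bool" where
  "master_linear \<phi> \<longleftrightarrow> (\<forall>s i j. \<phi> (s, i) = \<phi> (s, j))"

definition ev_lett :: "('s \<times> nat \<Rightarrow> 'b::comm_ring_1) \<Rightarrow> 's lett \<Rightarrow> 'b" where
  "ev_lett \<phi> l = (if fst l then \<phi> (snd l) else (THE y. \<phi> (snd l) * y = 1))"

definition evE :: "('k::comm_ring_1 poly \<Rightarrow> 'b::comm_ring_1) \<Rightarrow> ('s \<times> nat \<Rightarrow> 'b)
                   \<Rightarrow> ('s, 'k) elt \<Rightarrow> 'b" where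
  "evE \<iota> \<phi> x = (\<Sum>w\<in>supp x. \<iota> (x w) * prod_list (map (ev_lett \<phi>) w))"

definition evGen :: "('k::comm_ring_1 poly \<Rightarrow> 'b::comm_ring_1) \<Rightarrow> ('s \<times> nat \<Rightarrow> 'b)
     \<Rightarrow> (nat \<Rightarrow> ('s, 'k) elt \<times> 'k poly) \<Rightarrow> nat \<Rightarrow> 'b \<times> 'b" where
  "evGen \<iota> \<phi> g n = (evE \<iota> \<phi> (fst (g n)), \<iota> (snd (g n)))"

end

theory Submission
  imports Defs
begin

text \<open>Write \<Phi> m w for \<phi>(D^m w), where D is the q-derivative for the order KSO. Since
  D(u w) = D(u) up(w) + u D(w), and since the hypothesis R(s_{i+1}) = q up(R(s_i)) together
  with master-linearity gives \<Phi> m (up w) = q^m \<Phi> m w, these evaluations obey the q-Leibniz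
  rule \<Phi> m (u w) = \<Sum>k. [m choose k]_q \<Phi> k u \<Phi> (m-k) w. Gaussian binomials are symmetric,
  so \<Phi> m (u w) = \<Phi> m (w u) and \<Phi> m w depends only on the multiset of letters of w. Hence
  permuting letters by \<rho> after a derivation step changes no later evaluation, and by
  induction \<phi>(D_\<rho>^n f) = \<phi>(D_KSO^n f) for every n.\<close>

section \<open>Free reduction\<close>

fun cons_red :: "'s lett \<Rightarrow> 's word \<Rightarrow> 's word" where
  "cons_red x [] = [x]"
| "cons_red x (y # ys) = (if y = inv_lett x then ys else x # y # ys)"

lemma red_Cons: "red (x # xs) = cons_red x (red xs)"
  by (cases "red xs") auto

declare red.simps(2) [simp del] red_Cons [simp]

fun freely_reduced :: "'s word \<Rightarrow> bool" where
  "freely_reduced [] = True"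
| "freely_reduced [x] = True"
| "freely_reduced (x # y # ys) \<longleftrightarrow> y \<noteq> inv_lett x \<and> freely_reduced (y # ys)"

lemma freely_reduced_ConsD: "freely_reduced (y # ys) \<Longrightarrow> freely_reduced ys"
  by (cases ys) auto

lemma freely_reduced_cons_red: "freely_reduced v \<Longrightarrow> freely_reduced (cons_red x v)"
  by (induction v rule: freely_reduced.induct) (auto dest: freely_reduced_ConsD)

lemma freely_reduced_red: "freely_reduced (red w)"
  by (induction w) (auto intro: freely_reduced_cons_red)

lemma red_freely_reduced: "freely_reduced w \<Longrightarrow> red w = w"
  by (induction w rule: freely_reduced.induct) auto

lemma red_red [simp]: "red (red w) = red w"
  by (rule red_freely_reduced [OF freely_reduced_red])

lemma inv_lett_inv_lett [simp]: "inv_lett (inv_lett x) = x"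
  by (simp add: inv_lett_def)


lemma cons_red_cons_red_inv_lett:
  "freely_reduced v \<Longrightarrow> cons_red x (cons_red (inv_lett x) v) = v"
  by (induction v rule: freely_reduced.induct) auto

lemma red_append_foldr: "red (a @ b) = foldr cons_red a (red b)"
  by (induction a) auto

lemma freely_reduced_foldr: "freely_reduced v \<Longrightarrow> freely_reduced (foldr cons_red a v)"
  by (induction a) (auto intro: freely_reduced_cons_red)

lemma foldr_cons_red_red:
  assumes "freely_reduced v"
  shows "foldr cons_red (red a) v = foldr cons_red a v"
proof (induction a)
  case Nil
  show ?case by simp
next
  case (Cons x a)
  show ?case
  proof (cases "red a")
    case Nil
    with Cons.IH show ?thesis by simp
  next
    case (Cons y ys)
    show ?thesis
    proof (cases "y = inv_lett x")
      case True
      have "foldr cons_red (x # a) v = cons_red x (cons_red (inv_lett x) (foldr cons_red ys v))"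
        using Cons.IH \<open>red a = y # ys\<close> True by simp
      also have "\<dots> = foldr cons_red ys v"
        by (rule cons_red_cons_red_inv_lett [OF freely_reduced_foldr [OF assms]])
      finally show ?thesis
        using \<open>red a = y # ys\<close> True by simp
    next
      case False
      with Cons.IH \<open>red a = y # ys\<close> show ?thesis by simp
    qed
  qed
qed

lemma red_red_append: "red (red a @ b) = red (a @ b)"
  by (simp add: red_append_foldr foldr_cons_red_red [OF freely_reduced_red])

lemma red_append_red: "red (a @ red b) = red (a @ b)"
  by (simp add: red_append_foldr)

lemma red_append_red_append: "red (a @ red z @ b) = red (a @ z @ b)"
  by (metis red_red_append red_append_red)

lemma red_red_append_red: "red (red a @ z @ red b) = red (a @ z @ b)"
  by (metis red_red_append red_append_red)

lemma red_inv_lett_pair: "red [x, inv_lett x] = []"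
  by simp

lemma inj_up_l: "inj up_l"
  by (rule injI) (auto simp: up_l_def prod_eq_iff)

lemma up_l_inv_lett: "up_l (inv_lett x) = inv_lett (up_l x)"
  by (simp add: up_l_def inv_lett_def)

lemma cons_red_map_up_l: "cons_red (up_l x) (map up_l v) = map up_l (cons_red x v)"
  by (cases v) (auto simp: up_l_inv_lett [symmetric] inj_eq [OF inj_up_l])

lemma red_map_up_l: "red (map up_l w) = map up_l (red w)"
  by (induction w) (auto simp: cons_red_map_up_l)

section \<open>Formal sums of words\<close>

text \<open>A formal sum is a list of terms (c, u) whose words u need not be reduced; it stands
  for the element of E obtained by reducing every word. Computing with these lists
  postpones all free reductions to the very end.\<close>

type_synonym ('s, 'k) fsum = "('k poly \<times> 's word) list"

definition elt_of :: "('s, 'k::comm_ring_1) fsum \<Rightarrow> ('s, 'k) elt" where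
  "elt_of X = (\<lambda>v. sum_list (map (\<lambda>(c, u). if red u = v then c else 0) X))"

definition fs_of :: "('s, 'k::comm_ring_1) elt \<Rightarrow> ('s, 'k) fsum" where
  "fs_of x = map (\<lambda>w. (x w, w)) (SOME L. distinct L \<and> set L = supp x)"

definition fs_scale :: "'k::comm_ring_1 poly \<Rightarrow> ('s, 'k) fsum \<Rightarrow> ('s, 'k) fsum" where
  "fs_scale k X = map (\<lambda>(c, u). (k * c, u)) X"

definition fs_wrap :: "'s word \<Rightarrow> 's word \<Rightarrow> ('s, 'k::comm_ring_1) fsum \<Rightarrow> ('s, 'k) fsum" where
  "fs_wrap a b X = map (\<lambda>(c, z). (c, a @ z @ b)) X"

definition fs_up :: "('s, 'k::comm_ring_1) fsum \<Rightarrow> ('s, 'k) fsum" where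
  "fs_up X = map (\<lambda>(c, u). (c, map up_l u)) X"

definition fs_mul :: "('s, 'k::comm_ring_1) fsum \<Rightarrow> ('s, 'k) fsum \<Rightarrow> ('s, 'k) fsum" where
  "fs_mul X Y = concat (map (\<lambda>(c, u). map (\<lambda>(d, w). (c * d, u @ w)) Y) X)"

lemma elt_of_Nil [simp]: "elt_of [] v = 0"
  by (simp add: elt_of_def)

lemma elt_of_Cons: "elt_of ((c, u) # X) v = (if red u = v then c else 0) + elt_of X v"
  by (simp add: elt_of_def)

lemma elt_of_append [simp]: "elt_of (X @ Y) v = elt_of X v + elt_of Y v"
  by (simp add: elt_of_def)

lemma elt_of_concat: "elt_of (concat Xs) v = sum_list (map (\<lambda>X. elt_of X v) Xs)"
  by (induction Xs) auto

lemma elt_of_append_cong: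
  "elt_of X = elt_of X' \<Longrightarrow> elt_of Y = elt_of Y' \<Longrightarrow> elt_of (X @ Y) = elt_of (X' @ Y')"
  by (rule ext) simp

lemma fs_scale_Nil [simp]: "fs_scale k [] = []"
  by (simp add: fs_scale_def)

lemma fs_scale_Cons [simp]: "fs_scale k ((c, u) # X) = (k * c, u) # fs_scale k X"
  by (simp add: fs_scale_def)

lemma fs_scale_append [simp]: "fs_scale k (X @ Y) = fs_scale k X @ fs_scale k Y"
  by (simp add: fs_scale_def)

lemma fs_scale_fs_scale: "fs_scale k (fs_scale k' X) = fs_scale (k * k') X"
  by (induction X) (auto simp: fs_scale_def mult.assoc)

lemma fs_scale_one [simp]: "fs_scale 1 X = X"
  by (induction X) (auto simp: fs_scale_def)

lemma elt_of_fs_scale [simp]: "elt_of (fs_scale k X) v = k * elt_of X v"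
  by (induction X) (auto simp: elt_of_Cons algebra_simps)

lemma fs_wrap_Nil [simp]: "fs_wrap a b [] = []"
  by (simp add: fs_wrap_def)

lemma fs_wrap_append [simp]: "fs_wrap a b (X @ Y) = fs_wrap a b X @ fs_wrap a b Y"
  by (simp add: fs_wrap_def)

lemma fs_wrap_concat: "fs_wrap a b (concat Xs) = concat (map (fs_wrap a b) Xs)"
  by (induction Xs) auto

lemma fs_wrap_Nil_Nil [simp]: "fs_wrap [] [] X = X"
  by (induction X) (auto simp: fs_wrap_def)

lemma fs_wrap_fs_wrap: "fs_wrap a b (fs_wrap a' b' X) = fs_wrap (a @ a') (b' @ b) X"
  by (induction X) (auto simp: fs_wrap_def)

lemma fs_wrap_fs_scale: "fs_wrap a b (fs_scale k X) = fs_scale k (fs_wrap a b X)"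
  by (induction X) (auto simp: fs_wrap_def)


lemma fs_up_concat: "fs_up (concat Xs) = concat (map fs_up Xs)"
  by (induction Xs) (auto simp: fs_up_def)

lemma fs_up_fs_scale: "fs_up (fs_scale k X) = fs_scale k (fs_up X)"
  by (induction X) (auto simp: fs_up_def)

lemma fs_up_fs_wrap: "fs_up (fs_wrap a b X) = fs_wrap (map up_l a) (map up_l b) (fs_up X)"
  by (induction X) (auto simp: fs_up_def fs_wrap_def)

lemma fs_mul_single_left: "fs_mul [(1, a)] Y = fs_wrap a [] Y"
  by (induction Y) (auto simp: fs_mul_def fs_wrap_def)

lemma fs_mul_single_right: "fs_mul X [(1, b)] = fs_wrap [] b X"
  by (induction X) (auto simp: fs_mul_def fs_wrap_def)

lemma elt_of_fs_mul:
  "elt_of (fs_mul X Y) v =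
     sum_list (map (\<lambda>(c, u). sum_list (map (\<lambda>(d, w). if red (u @ w) = v then c * d else 0) Y)) X)"
proof (induction X)
  case Nil
  show ?case by (simp add: fs_mul_def)
next
  case (Cons x X)
  obtain c u where x: "x = (c, u)" by (cases x)
  have "elt_of (map (\<lambda>(d, w). (c * d, u @ w)) Y) v
      = sum_list (map (\<lambda>(d, w). if red (u @ w) = v then c * d else 0) Y)"
    by (induction Y) (auto simp: elt_of_Cons)
  with Cons.IH show ?case by (simp add: fs_mul_def x)
qed

lemma supp_elt_of: "supp (elt_of X) \<subseteq> red ` snd ` set X"
proof
  fix a
  assume "a \<in> supp (elt_of X)"
  then have "elt_of X a \<noteq> 0" by (simp add: supp_def)
  then show "a \<in> red ` snd ` set X"
    by (induction X) (auto simp: elt_of_Cons split: if_splits)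
qed

lemma finite_supp_elt_of: "finite (supp (elt_of X))"
  by (rule finite_subset [OF supp_elt_of]) simp

lemma sum_elt_of_superset:
  fixes h :: "'k::comm_ring_1 poly \<Rightarrow> 'c::comm_ring_1"
  assumes "finite A" and "red ` snd ` set X \<subseteq> A" and h_add: "\<And>a b. h (a + b) = h a + h b"
  shows "(\<Sum>a\<in>A. h (elt_of X a) * g a) = sum_list (map (\<lambda>(c, u). h c * g (red u)) X)"
  using assms(2)
proof (induction X)
  case Nil
  have "h 0 = 0" using h_add [of 0 0] by simp
  then show ?case by simp
next
  case (Cons x X)
  obtain c u where x: "x = (c, u)" by (cases x)
  have h0: "h 0 = 0" using h_add [of 0 0] by simp
  have "h (elt_of (x # X) a) * g a = (if red u = a then h c * g a else 0) + h (elt_of X a) * g a"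
    for a by (simp add: x elt_of_Cons h_add h0 distrib_right)
  then have "(\<Sum>a\<in>A. h (elt_of (x # X) a) * g a)
      = (\<Sum>a\<in>A. if red u = a then h c * g a else 0) + (\<Sum>a\<in>A. h (elt_of X a) * g a)"
    by (simp add: sum.distrib)
  also have "(\<Sum>a\<in>A. if red u = a then h c * g a else 0) = h c * g (red u)"
    using Cons.prems x assms(1) by simp
  finally show ?case using Cons x by simp
qed

lemma sum_supp_elt_of:
  fixes h :: "'k::comm_ring_1 poly \<Rightarrow> 'c::comm_ring_1"
  assumes h_add: "\<And>a b. h (a + b) = h a + h b"
  shows "(\<Sum>a\<in>supp (elt_of X). h (elt_of X a) * g a) = sum_list (map (\<lambda>(c, u). h c * g (red u)) X)"
proof -
  have h0: "h 0 = 0" using h_add [of 0 0] by simp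
  have "(\<Sum>a\<in>supp (elt_of X). h (elt_of X a) * g a) = (\<Sum>a\<in>red ` snd ` set X. h (elt_of X a) * g a)"
    by (rule sum.mono_neutral_left) (use supp_elt_of [of X] in \<open>auto simp: h0 supp_def\<close>)
  also have "\<dots> = sum_list (map (\<lambda>(c, u). h c * g (red u)) X)"
    by (rule sum_elt_of_superset) (auto simp: h_add)
  finally show ?thesis .
qed

lemma sum_supp_elt_of_id:
  "(\<Sum>a\<in>supp (elt_of X). elt_of X a * g a) = sum_list (map (\<lambda>(c, u). c * g (red u)) X)"
  using sum_supp_elt_of [of "\<lambda>x. x" X g] by simp

lemma elt_of_fs_of:
  assumes "in_E x"
  shows "elt_of (fs_of x) = x"
proof
  fix v
  have fin: "finite (supp x)" using assms by (simp add: in_E_def)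
  define L where "L = (SOME L. distinct L \<and> set L = supp x)"
  have L: "distinct L \<and> set L = supp x"
    unfolding L_def by (rule someI_ex) (metis finite_distinct_list [OF fin])
  have red_id: "red w = w" if "w \<in> supp x" for w
    using assms that by (auto simp: in_E_def reduced_def)
  have "elt_of (fs_of x) v = sum_list (map (\<lambda>w. if red w = v then x w else 0) L)"
    by (simp add: fs_of_def L_def [symmetric] elt_of_def o_def)
  also have "\<dots> = (\<Sum>w\<in>supp x. if red w = v then x w else 0)"
    using L by (simp add: sum_list_distinct_conv_sum_set)
  also have "\<dots> = (\<Sum>w\<in>supp x. if w = v then x w else 0)"
    by (rule sum.cong) (auto simp: red_id)
  also have "\<dots> = x v"
    using fin by (auto simp: supp_def)
  finally show "elt_of (fs_of x) v = x v" .
qed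

lemma mono_eq_elt_of: "mono w = elt_of [(1, w)]"
  by (auto simp: mono_def elt_of_def)

lemma ext_elt_of: "ext F (elt_of X) = (\<lambda>v. sum_list (map (\<lambda>(c, u). c * F (red u) v) X))"
  unfolding ext_def by (rule ext, rule sum_supp_elt_of_id)

lemma mul_elt_of:
  fixes X Y :: "('s, 'k::comm_ring_1) fsum"
  shows "mul (elt_of X) (elt_of Y) = elt_of (fs_mul X Y)"
proof
  fix v :: "'s word"
  let ?x = "elt_of X" and ?y = "elt_of Y"
  let ?\<delta> = "\<lambda>w. if red w = v then 1 else 0"
  have "mul ?x ?y v = (\<Sum>p\<in>{p \<in> supp ?x \<times> supp ?y. red (fst p @ snd p) = v}. ?x (fst p) * ?y (snd p))"
    unfolding mul_def by (rule sum.cong) auto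
  also have "\<dots> = (\<Sum>a\<in>supp ?x. \<Sum>b\<in>supp ?y. if red (a @ b) = v then ?x a * ?y b else 0)"
    by (simp add: sum.inter_filter finite_supp_elt_of sum.cartesian_product case_prod_beta)
  also have "\<dots> = (\<Sum>a\<in>supp ?x. ?x a * (\<Sum>b\<in>supp ?y. ?y b * ?\<delta> (a @ b)))"
    by (simp add: sum_distrib_left algebra_simps if_distrib cong: if_cong)
  also have "\<dots> = sum_list (map (\<lambda>(c, u). c * sum_list (map (\<lambda>(d, w). d * ?\<delta> (red u @ red w)) Y)) X)"
    by (simp add: sum_supp_elt_of_id)
  also have "\<dots> = elt_of (fs_mul X Y) v"
    unfolding elt_of_fs_mul red_red_append red_append_red
    by (simp add: sum_list_const_mult [symmetric] if_distrib case_prod_unfold cong: if_cong)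
  finally show "mul ?x ?y v = elt_of (fs_mul X Y) v" .
qed

lemma elt_of_fs_wrap:
  "elt_of (fs_wrap a b X) v = (\<Sum>y\<in>supp (elt_of X). elt_of X y * (if red (a @ y @ b) = v then 1 else 0))"
  unfolding sum_supp_elt_of_id red_append_red_append
  by (induction X) (auto simp: fs_wrap_def elt_of_Cons)

lemma elt_of_fs_wrap_cong: "elt_of X = elt_of Y \<Longrightarrow> elt_of (fs_wrap a b X) = elt_of (fs_wrap a b Y)"
  by (rule ext) (simp add: elt_of_fs_wrap)

lemma elt_of_fs_wrap_red:
  "red a = red a' \<Longrightarrow> red b = red b' \<Longrightarrow> elt_of (fs_wrap a b X) = elt_of (fs_wrap a' b' X)"
  by (rule ext) (simp add: elt_of_fs_wrap flip: red_red_append_red [of a _ b] red_red_append_red [of a' _ b'])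

lemma upE_elt_of: "upE (elt_of X) = elt_of (fs_up X)"
  by (rule ext) (induction X, auto simp: upE_def ext_elt_of fs_up_def elt_of_Cons mono_def red_map_up_l)

section \<open>The q-derivative on formal sums\<close>

definition rule_fs :: "('s \<times> nat \<Rightarrow> ('s, 'k::comm_ring_1) elt) \<Rightarrow> 's lett \<Rightarrow> ('s, 'k) fsum" where
  "rule_fs R l =
     (if fst l then fs_of (R (snd l))
      else fs_scale (-1) (fs_wrap [(False, snd l)] [(False, (fst (snd l), Suc (snd (snd l))))]
                                  (fs_of (R (snd l)))))"

definition deriv_at :: "('s \<times> nat \<Rightarrow> ('s, 'k::comm_ring_1) elt) \<Rightarrow> nat \<Rightarrow> 's word \<Rightarrow> ('s, 'k) fsum" where
  "deriv_at R j w = fs_wrap (take j w) (map up_l (drop (Suc j) w)) (rule_fs R (w ! j))"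

definition deriv_word :: "('s \<times> nat \<Rightarrow> ('s, 'k::comm_ring_1) elt) \<Rightarrow> 's word \<Rightarrow> ('s, 'k) fsum" where
  "deriv_word R w = concat (map (\<lambda>j. deriv_at R j w) [0..<length w])"

definition order_fs :: "('s word \<Rightarrow> 's word) \<Rightarrow> ('s, 'k::comm_ring_1) fsum \<Rightarrow> ('s, 'k) fsum" where
  "order_fs \<rho> X = map (\<lambda>(c, u). (c, \<rho> (red u))) X"

definition qderiv_fs :: "('s \<times> nat \<Rightarrow> ('s, 'k::comm_ring_1) elt) \<Rightarrow> ('s word \<Rightarrow> 's word)
    \<Rightarrow> ('s, 'k) fsum \<Rightarrow> ('s, 'k) fsum" where
  "qderiv_fs R \<rho> X = concat (map (\<lambda>(c, u). fs_scale c (order_fs \<rho> (deriv_word R (red u)))) X)"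

lemma rhoE_elt_of: "rhoE \<rho> (elt_of X) = elt_of (order_fs \<rho> X)"
  by (rule ext) (induction X, auto simp: rhoE_def order_fs_def ext_elt_of elt_of_Cons mono_def)

lemma qderiv_fs_Nil [simp]: "qderiv_fs R \<rho> [] = []"
  by (simp add: qderiv_fs_def)

lemma qderiv_fs_Cons [simp]:
  "qderiv_fs R \<rho> ((c, u) # X) = fs_scale c (order_fs \<rho> (deriv_word R (red u))) @ qderiv_fs R \<rho> X"
  by (simp add: qderiv_fs_def)

lemma qderiv_fs_append [simp]: "qderiv_fs R \<rho> (X @ Y) = qderiv_fs R \<rho> X @ qderiv_fs R \<rho> Y"
  by (simp add: qderiv_fs_def)

lemma qderiv_fs_fs_scale: "qderiv_fs R \<rho> (fs_scale k X) = fs_scale k (qderiv_fs R \<rho> X)"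
  by (induction X) (auto simp: fs_scale_fs_scale)

lemma qderiv_fs_pow_Nil [simp]: "(qderiv_fs R \<rho> ^^ n) [] = []"
  by (induction n) auto

lemma qderiv_fs_pow_append:
  "(qderiv_fs R \<rho> ^^ n) (X @ Y) = (qderiv_fs R \<rho> ^^ n) X @ (qderiv_fs R \<rho> ^^ n) Y"
  by (induction n) auto

lemma qderiv_fs_pow_fs_scale: "(qderiv_fs R \<rho> ^^ n) (fs_scale k X) = fs_scale k ((qderiv_fs R \<rho> ^^ n) X)"
  by (induction n) (auto simp: qderiv_fs_fs_scale)

lemma elt_of_rule_fs:
  assumes "in_E (R (snd l))"
  shows "elt_of (rule_fs R l) = Rl R l"
proof (cases "fst l")
  case True
  then show ?thesis by (simp add: rule_fs_def Rl_def elt_of_fs_of assms)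
next
  case False
  have "Rl R l = (\<lambda>v. - mul (mul (elt_of [(1, [(False, snd l)])]) (elt_of (fs_of (R (snd l)))))
                          (elt_of [(1, [(False, (fst (snd l), Suc (snd (snd l))))])]) v)"
    using False by (simp add: Rl_def mono_eq_elt_of elt_of_fs_of assms)
  also have "\<dots> = elt_of (rule_fs R l)"
    using False
    by (intro ext) (simp add: mul_elt_of fs_mul_single_left fs_mul_single_right fs_wrap_fs_wrap rule_fs_def)
  finally show ?thesis by simp
qed

lemma qD_elt_of:
  assumes "\<forall>x. in_E (R x)"
  shows "qD R \<rho> (elt_of X) = elt_of (qderiv_fs R \<rho> X)"
proof
  fix v
  have summand: "rhoE \<rho> (mul (mul (mono (take j w)) (Rl R (w ! j))) (upE (mono (drop (Suc j) w))))
      = elt_of (order_fs \<rho> (deriv_at R j w))" for j w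
    by (simp add: elt_of_rule_fs [symmetric] assms mono_eq_elt_of upE_elt_of mul_elt_of
        fs_mul_single_left fs_mul_single_right fs_wrap_fs_wrap fs_up_def rhoE_elt_of
        deriv_at_def)
  have "(\<Sum>j<length w. elt_of (order_fs \<rho> (deriv_at R j w)) v) = elt_of (order_fs \<rho> (deriv_word R w)) v"
    for w
    by (simp add: deriv_word_def order_fs_def elt_of_concat interv_sum_list_conv_sum_set_nat
        atLeast0LessThan o_def map_concat)
  with summand show "qD R \<rho> (elt_of X) v = elt_of (qderiv_fs R \<rho> X) v"
    by (induction X) (auto simp: qD_def ext_elt_of)
qed

lemma qD_pow_elt_of:
  assumes "\<forall>x. in_E (R x)"
  shows "(qD R \<rho> ^^ n) (elt_of X) = elt_of ((qderiv_fs R \<rho> ^^ n) X)"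
  by (induction n) (simp_all add: qD_elt_of [OF assms])

lemma elt_of_order_fs_KSO: "elt_of (order_fs KSO X) = elt_of X"
  by (rule ext) (induction X, auto simp: order_fs_def KSO_def elt_of_Cons)

lemma deriv_word_append:
  "deriv_word R (u @ w) = fs_wrap [] (map up_l w) (deriv_word R u) @ fs_wrap u [] (deriv_word R w)"
proof -
  have "[0..<length (u @ w)] = [0..<length u] @ map (\<lambda>i. i + length u) [0..<length w]"
    by (simp add: map_add_upt upt_add_eq_append [of 0 "length u" "length w", simplified] add.commute)
  then have "deriv_word R (u @ w) = concat (map (\<lambda>j. deriv_at R j (u @ w)) [0..<length u])
      @ concat (map (\<lambda>i. deriv_at R (i + length u) (u @ w)) [0..<length w])"
    by (simp add: deriv_word_def o_def)
  also have "concat (map (\<lambda>j. deriv_at R j (u @ w)) [0..<length u]) = fs_wrap [] (map up_l w) (deriv_word R u)"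
    unfolding deriv_word_def fs_wrap_concat map_map o_def
    by (rule arg_cong [where f = concat], rule map_cong)
      (simp_all add: deriv_at_def fs_wrap_fs_wrap nth_append)
  also have "concat (map (\<lambda>i. deriv_at R (i + length u) (u @ w)) [0..<length w]) = fs_wrap u [] (deriv_word R w)"
    by (simp add: deriv_word_def fs_wrap_concat o_def deriv_at_def fs_wrap_fs_wrap nth_append)
  finally show ?thesis .
qed

lemma deriv_word_Cons:
  "deriv_word R (x # xs) = fs_wrap [] (map up_l xs) (deriv_word R [x]) @ fs_wrap [x] [] (deriv_word R xs)"
  using deriv_word_append [of R "[x]" xs] by simp

lemma elt_of_deriv_word_inv_pair: "elt_of (deriv_word R [x, inv_lett x]) = elt_of []"
proof -
  obtain b s i where x: "x = (b, (s, i))" by (cases x) auto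
  let ?T = "fs_of (R (s, i))" and ?y = "(False, (s, Suc i))"
  have pair: "deriv_word R [x, inv_lett x] = fs_wrap [] [up_l (inv_lett x)] (rule_fs R x)
      @ fs_wrap [x] [] (rule_fs R (inv_lett x))"
    by (simp add: deriv_word_def deriv_at_def upt_rec)
  show ?thesis
  proof (cases b)
    case True
    have "elt_of (fs_wrap [x, inv_lett x] [?y] ?T) = elt_of (fs_wrap [] [?y] ?T)"
      by (rule elt_of_fs_wrap_red) (simp_all add: red_inv_lett_pair)
    moreover have "deriv_word R [x, inv_lett x] = fs_wrap [] [?y] ?T @ fs_scale (-1) (fs_wrap [x, inv_lett x] [?y] ?T)"
      unfolding pair using True by (simp add: x rule_fs_def inv_lett_def up_l_def fs_wrap_fs_scale fs_wrap_fs_wrap)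
    ultimately show ?thesis by (intro ext) simp
  next
    case False
    have "elt_of (fs_wrap [x] [?y, inv_lett ?y] ?T) = elt_of (fs_wrap [x] [] ?T)"
      by (rule elt_of_fs_wrap_red) (simp_all add: red_inv_lett_pair)
    moreover have "deriv_word R [x, inv_lett x] = fs_scale (-1) (fs_wrap [x] [?y, inv_lett ?y] ?T) @ fs_wrap [x] [] ?T"
      unfolding pair using False by (simp add: x rule_fs_def inv_lett_def up_l_def fs_wrap_fs_scale fs_wrap_fs_wrap)
    ultimately show ?thesis by (intro ext) simp
  qed
qed

lemma elt_of_deriv_word_red: "elt_of (deriv_word R (red u)) = elt_of (deriv_word R u)"
proof (induction u)
  case Nil
  show ?case by simp
next
  case (Cons x xs)
  have "elt_of (fs_wrap [] (map up_l (red xs)) (deriv_word R [x])) = elt_of (fs_wrap [] (map up_l xs) (deriv_word R [x]))"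
    by (rule elt_of_fs_wrap_red) (simp_all add: red_map_up_l)
  moreover have "elt_of (fs_wrap [x] [] (deriv_word R (red xs))) = elt_of (fs_wrap [x] [] (deriv_word R xs))"
    using Cons.IH by (rule elt_of_fs_wrap_cong)
  ultimately have reduce_tail: "elt_of (deriv_word R (x # red xs)) = elt_of (deriv_word R (x # xs))"
    unfolding deriv_word_Cons [of R x xs] deriv_word_Cons [of R x "red xs"]
    by (rule elt_of_append_cong)
  show ?case
  proof (cases "\<exists>ys. red xs = inv_lett x # ys")
    case True
    then obtain ys where ys: "red xs = inv_lett x # ys" ..
    have "elt_of (deriv_word R (x # red xs))
        = elt_of (fs_wrap [] (map up_l ys) (deriv_word R [x, inv_lett x]) @ fs_wrap [x, inv_lett x] [] (deriv_word R ys))"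
      using deriv_word_append [of R "[x, inv_lett x]" ys] ys by simp
    also have "\<dots> = elt_of (fs_wrap [] (map up_l ys) [] @ fs_wrap [] [] (deriv_word R ys))"
      by (intro elt_of_append_cong elt_of_fs_wrap_cong elt_of_deriv_word_inv_pair elt_of_fs_wrap_red)
        (simp_all add: red_inv_lett_pair)
    also have "\<dots> = elt_of (deriv_word R (red (x # xs)))"
      using ys by simp
    finally show ?thesis using reduce_tail by simp
  next
    case False
    then have "red (x # xs) = x # red xs"
      by (cases "red xs") auto
    with reduce_tail show ?thesis by simp
  qed
qed

lemma elt_of_rule_fs_up_l:
  assumes "\<forall>x. in_E (R x)"
    and "\<forall>s i. R (s, Suc i) = smul (monom 1 1) (upE (R (s, i)))"
  shows "elt_of (rule_fs R (up_l l)) = elt_of (fs_scale (monom 1 1) (fs_up (rule_fs R l)))"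
proof -
  obtain b s i where l: "l = (b, (s, i))" by (cases l) auto
  let ?T = "fs_of (R (s, i))" and ?q = "monom 1 1"
  have shift: "elt_of (fs_of (R (s, Suc i))) = elt_of (fs_scale ?q (fs_up ?T))"
  proof -
    have "elt_of (fs_of (R (s, Suc i))) = R (s, Suc i)"
      using assms(1) by (simp add: elt_of_fs_of)
    also have "\<dots> = smul ?q (upE (elt_of ?T))"
      using assms by (simp add: elt_of_fs_of)
    finally show ?thesis by (simp add: upE_elt_of smul_def fun_eq_iff)
  qed
  show ?thesis
  proof (cases b)
    case True
    with shift show ?thesis by (simp add: l rule_fs_def up_l_def)
  next
    case False
    let ?a = "[(False, (s, Suc i))]" and ?b = "[(False, (s, Suc (Suc i)))]"
    have "elt_of (rule_fs R (up_l l)) = elt_of (fs_scale (-1) (fs_wrap ?a ?b (fs_of (R (s, Suc i)))))"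
      using False by (simp add: l rule_fs_def up_l_def)
    also have "\<dots> = elt_of (fs_scale (-1) (fs_wrap ?a ?b (fs_scale ?q (fs_up ?T))))"
      using elt_of_fs_wrap_cong [OF shift] by (simp add: fun_eq_iff)
    also have "\<dots> = elt_of (fs_scale ?q (fs_up (rule_fs R l)))"
      using False by (intro ext) (simp add: l rule_fs_def up_l_def fs_up_fs_scale fs_up_fs_wrap fs_wrap_fs_scale)
    finally show ?thesis .
  qed
qed

lemma elt_of_deriv_word_map_up_l:
  assumes "\<forall>x. in_E (R x)"
    and "\<forall>s i. R (s, Suc i) = smul (monom 1 1) (upE (R (s, i)))"
  shows "elt_of (deriv_word R (map up_l w)) = elt_of (fs_scale (monom 1 1) (fs_up (deriv_word R w)))"
proof
  fix v
  have "elt_of (deriv_at R j (map up_l w)) = elt_of (fs_scale (monom 1 1) (fs_up (deriv_at R j w)))"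
    if "j < length w" for j
    using that elt_of_fs_wrap_cong [OF elt_of_rule_fs_up_l [OF assms, of "w ! j"]]
    by (simp add: deriv_at_def take_map drop_map fs_up_fs_wrap fs_wrap_fs_scale)
  then show "elt_of (deriv_word R (map up_l w)) v = elt_of (fs_scale (monom 1 1) (fs_up (deriv_word R w))) v"
    by (simp add: deriv_word_def elt_of_concat fs_up_concat interv_sum_list_conv_sum_set_nat
        atLeast0LessThan o_def sum_distrib_left)
qed

section \<open>Evaluation\<close>

definition ev_word :: "('s \<times> nat \<Rightarrow> 'b::comm_ring_1) \<Rightarrow> 's word \<Rightarrow> 'b" where
  "ev_word \<phi> u = prod_list (map (ev_lett \<phi>) u)"

definition ev_fs :: "('k::comm_ring_1 poly \<Rightarrow> 'b::comm_ring_1) \<Rightarrow> ('s \<times> nat \<Rightarrow> 'b) \<Rightarrow> ('s, 'k) fsum \<Rightarrow> 'b" where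
  "ev_fs \<iota> \<phi> X = sum_list (map (\<lambda>(c, u). \<iota> c * ev_word \<phi> u) X)"

lemma ev_word_Nil [simp]: "ev_word \<phi> [] = 1"
  by (simp add: ev_word_def)

lemma ev_word_Cons [simp]: "ev_word \<phi> (x # u) = ev_lett \<phi> x * ev_word \<phi> u"
  by (simp add: ev_word_def)

lemma ev_fs_Nil [simp]: "ev_fs \<iota> \<phi> [] = 0"
  by (simp add: ev_fs_def)

lemma ev_fs_Cons [simp]: "ev_fs \<iota> \<phi> ((c, u) # X) = \<iota> c * ev_word \<phi> u + ev_fs \<iota> \<phi> X"
  by (simp add: ev_fs_def)

lemma is_evaluation_add: "is_evaluation \<iota> \<phi> \<Longrightarrow> \<iota> (a + b) = \<iota> a + \<iota> b"
  by (simp add: is_evaluation_def)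

lemma is_evaluation_mult: "is_evaluation \<iota> \<phi> \<Longrightarrow> \<iota> (a * b) = \<iota> a * \<iota> b"
  by (simp add: is_evaluation_def)

lemma is_evaluation_one: "is_evaluation \<iota> \<phi> \<Longrightarrow> \<iota> 1 = 1"
  by (simp add: is_evaluation_def)

lemma ev_lett_mult_inv_lett:
  assumes "is_evaluation \<iota> \<phi>"
  shows "ev_lett \<phi> x * ev_lett \<phi> (inv_lett x) = 1"
proof -
  obtain b s where x: "x = (b, s)" by (cases x)
  obtain y where y: "\<phi> s * y = 1"
    using assms unfolding is_evaluation_def by blast
  have "y' = y" if "\<phi> s * y' = 1" for y'
  proof -
    have "y' = y' * (\<phi> s * y)" using y by simp
    also have "\<dots> = (\<phi> s * y') * y" by (simp add: ac_simps)
    finally show ?thesis using that by simp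
  qed
  with y have "\<exists>!y. \<phi> s * y = 1" by blast
  then have "\<phi> s * (THE y. \<phi> s * y = 1) = 1"
    by (rule theI')
  then have "\<phi> s * (THE y. \<phi> s * y = 1) = 1" and "(THE y. \<phi> s * y = 1) * \<phi> s = 1"
    by (simp_all add: mult.commute)
  then show ?thesis
    by (cases b) (simp_all add: x ev_lett_def inv_lett_def)
qed

lemma ev_word_cons_red:
  assumes "is_evaluation \<iota> \<phi>"
  shows "ev_word \<phi> (cons_red x v) = ev_lett \<phi> x * ev_word \<phi> v"
proof (cases v)
  case (Cons y ys)
  have "ev_lett \<phi> x * (ev_lett \<phi> (inv_lett x) * ev_word \<phi> ys) = ev_word \<phi> ys"
    using ev_lett_mult_inv_lett [OF assms, of x] by (simp flip: mult.assoc)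
  with Cons show ?thesis by auto
qed simp

lemma ev_word_red: "is_evaluation \<iota> \<phi> \<Longrightarrow> ev_word \<phi> (red u) = ev_word \<phi> u"
  by (induction u) (simp_all add: ev_word_cons_red)

lemma ev_word_map_up_l:
  assumes "master_linear \<phi>"
  shows "ev_word \<phi> (map up_l u) = ev_word \<phi> u"
proof -
  have "ev_lett \<phi> (up_l l) = ev_lett \<phi> l" for l
  proof -
    obtain b s i where l: "l = (b, (s, i))" by (cases l) auto
    have "\<phi> (s, Suc i) = \<phi> (s, i)" using assms unfolding master_linear_def by blast
    then show ?thesis by (simp add: l ev_lett_def up_l_def)
  qed
  then show ?thesis by (induction u) auto
qed

lemma evE_elt_of:
  assumes "is_evaluation \<iota> \<phi>"
  shows "evE \<iota> \<phi> (elt_of X) = ev_fs \<iota> \<phi> X"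
proof -
  have "evE \<iota> \<phi> (elt_of X) = (\<Sum>a\<in>supp (elt_of X). \<iota> (elt_of X a) * ev_word \<phi> a)"
    by (simp add: evE_def ev_word_def)
  also have "\<dots> = sum_list (map (\<lambda>(c, u). \<iota> c * ev_word \<phi> (red u)) X)"
    by (rule sum_supp_elt_of) (simp add: is_evaluation_add [OF assms])
  also have "\<dots> = ev_fs \<iota> \<phi> X"
    by (simp add: ev_fs_def ev_word_red [OF assms])
  finally show ?thesis .
qed

lemma ev_fs_append [simp]: "ev_fs \<iota> \<phi> (X @ Y) = ev_fs \<iota> \<phi> X + ev_fs \<iota> \<phi> Y"
  by (simp add: ev_fs_def)

lemma ev_fs_fs_scale: "is_evaluation \<iota> \<phi> \<Longrightarrow> ev_fs \<iota> \<phi> (fs_scale k X) = \<iota> k * ev_fs \<iota> \<phi> X"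
  by (induction X) (auto simp: is_evaluation_mult algebra_simps)

section \<open>Gaussian binomial coefficients\<close>

fun qbinom :: "'b::comm_ring_1 \<Rightarrow> nat \<Rightarrow> nat \<Rightarrow> 'b" where
  "qbinom Q 0 k = (if k = 0 then 1 else 0)"
| "qbinom Q (Suc m) 0 = 1"
| "qbinom Q (Suc m) (Suc k) = Q ^ (m - k) * qbinom Q m k + qbinom Q m (Suc k)"

lemma qbinom_0_right [simp]: "qbinom Q m 0 = 1"
  by (cases m) auto

lemma qbinom_eq_0: "m < k \<Longrightarrow> qbinom Q m k = 0"
proof (induction m arbitrary: k)
  case (Suc m)
  then show ?case by (cases k) auto
qed simp

lemma qbinom_diag: "qbinom Q m m = 1"
  by (induction m) (auto simp: qbinom_eq_0)

lemma qbinom_Suc_Suc': "qbinom Q (Suc m) (Suc k) = qbinom Q m k + Q ^ Suc k * qbinom Q m (Suc k)"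
proof (induction m arbitrary: k)
  case 0
  then show ?case by (cases k) auto
next
  case (Suc m)
  show ?case
  proof (cases k)
    case 0
    have "qbinom Q (Suc (Suc m)) (Suc 0) = Q * Q ^ m + (Q ^ m + qbinom Q m (Suc 0))"
      by simp
    also have "\<dots> = Q * Q ^ m + (1 + Q * qbinom Q m (Suc 0))"
      using Suc.IH [of 0] by simp
    also have "\<dots> = qbinom Q (Suc m) 0 + Q ^ Suc 0 * qbinom Q (Suc m) (Suc 0)"
      by (simp add: algebra_simps)
    finally show ?thesis by (simp add: 0)
  next
    case (Suc j)
    have exchange: "Q ^ (m - j) * Q ^ Suc j * qbinom Q m (Suc j)
        = Q ^ Suc (Suc j) * Q ^ (m - Suc j) * qbinom Q m (Suc j)"
    proof (cases "j < m")
      case True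
      then have "m - j + Suc j = Suc (Suc j) + (m - Suc j)" by simp
      then show ?thesis by (metis power_add)
    qed (simp add: qbinom_eq_0)
    have "qbinom Q (Suc (Suc m)) (Suc k)
        = Q ^ (m - j) * qbinom Q (Suc m) (Suc j) + qbinom Q (Suc m) (Suc (Suc j))"
      by (simp add: Suc)
    also have "\<dots> = Q ^ (m - j) * qbinom Q m j + Q ^ (m - j) * Q ^ Suc j * qbinom Q m (Suc j)
        + qbinom Q m (Suc j) + Q ^ Suc (Suc j) * qbinom Q m (Suc (Suc j))"
      by (simp only: Suc.IH) (simp add: algebra_simps)
    also have "\<dots> = (Q ^ (m - j) * qbinom Q m j + qbinom Q m (Suc j))
        + Q ^ Suc (Suc j) * (Q ^ (m - Suc j) * qbinom Q m (Suc j) + qbinom Q m (Suc (Suc j)))"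
      using exchange by (simp add: algebra_simps)
    also have "\<dots> = qbinom Q (Suc m) k + Q ^ Suc k * qbinom Q (Suc m) (Suc k)"
      by (simp add: Suc)
    finally show ?thesis .
  qed
qed

lemma qbinom_symmetric: "k \<le> m \<Longrightarrow> qbinom Q m (m - k) = qbinom Q m k"
proof (induction m arbitrary: k)
  case (Suc m)
  show ?case
  proof (cases k)
    case (Suc j)
    show ?thesis
    proof (cases "j = m")
      case False
      with Suc.prems \<open>k = Suc j\<close> obtain i where i: "m - j = Suc i" and "j < m"
        by (metis Suc_diff_Suc Suc_le_mono le_neq_implies_less)
      then have "i = m - Suc j" by simp
      then have "qbinom Q m i = qbinom Q m (Suc j)" and "qbinom Q m (Suc i) = qbinom Q m j"
        using Suc.IH [of "Suc j"] Suc.IH [of j] \<open>j < m\<close> i by simp_all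
      moreover have "qbinom Q (Suc m) (Suc m - k) = qbinom Q m i + Q ^ Suc i * qbinom Q m (Suc i)"
        using i \<open>k = Suc j\<close> qbinom_Suc_Suc' [of Q m i] by simp
      moreover have "qbinom Q (Suc m) k = Q ^ Suc i * qbinom Q m j + qbinom Q m (Suc j)"
        using i \<open>k = Suc j\<close> by simp
      ultimately show ?thesis by (simp add: algebra_simps)
    qed (simp add: Suc qbinom_diag)
  qed (simp add: qbinom_diag)
qed simp

lemma qbinom_convolution_Suc:
  fixes a b :: "nat \<Rightarrow> 'b::comm_ring_1"
  shows "(\<Sum>k\<le>m. qbinom Q m k * a (Suc k) * Q ^ (m - k) * b (m - k))
       + (\<Sum>k\<le>m. qbinom Q m k * a k * b (Suc (m - k)))
       = (\<Sum>k\<le>Suc m. qbinom Q (Suc m) k * a k * b (Suc m - k))"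
proof -
  have "(\<Sum>k\<le>m. qbinom Q m k * a k * b (Suc (m - k))) = (\<Sum>k\<le>Suc m. qbinom Q m k * a k * b (Suc m - k))"
    by (simp add: qbinom_eq_0 Suc_diff_le)
  also have "\<dots> = a 0 * b (Suc m) + (\<Sum>k\<le>m. qbinom Q m (Suc k) * a (Suc k) * b (m - k))"
    by (subst sum.atMost_Suc_shift) (simp del: sum.atMost_Suc)
  finally show ?thesis
    by (subst sum.atMost_Suc_shift) (simp del: sum.atMost_Suc add: algebra_simps sum.distrib)
qed

lemma qbinom_convolution_commute:
  fixes a b :: "nat \<Rightarrow> 'b::comm_ring_1"
  shows "(\<Sum>k\<le>m. qbinom Q m k * a k * b (m - k)) = (\<Sum>k\<le>m. qbinom Q m k * b k * a (m - k))"
proof -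
  have "(\<Sum>k\<le>m. qbinom Q m k * a k * b (m - k)) = (\<Sum>k\<le>m. qbinom Q m (m - k) * a (m - k) * b (m - (m - k)))"
    by (rule sum.reindex_bij_witness [of _ "\<lambda>k. m - k" "\<lambda>k. m - k"]) auto
  also have "\<dots> = (\<Sum>k\<le>m. qbinom Q m k * b k * a (m - k))"
    by (rule sum.cong) (auto simp: qbinom_symmetric)
  finally show ?thesis .
qed

lemma sum_list_mult_sum_commute:
  fixes h :: "'k \<Rightarrow> 'b::comm_ring_1"
  shows "sum_list (map (\<lambda>(c, z). h c * (\<Sum>k\<in>A. F k * G k z)) Z)
       = (\<Sum>k\<in>A. F k * sum_list (map (\<lambda>(c, z). h c * G k z) Z))"
  by (induction Z) (auto simp: sum.distrib sum_distrib_left algebra_simps)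

section \<open>The q-Leibniz rule for evaluated derivatives\<close>

locale shift_equivariant_evaluation =
  fixes R :: "'s \<times> nat \<Rightarrow> ('s, 'k::comm_ring_1) elt"
    and \<iota> :: "'k poly \<Rightarrow> 'b::comm_ring_1"
    and \<phi> :: "'s \<times> nat \<Rightarrow> 'b"
  assumes R_in_E: "\<forall>x. in_E (R x)"
    and R_shift: "\<forall>s i. R (s, Suc i) = smul (monom 1 1) (upE (R (s, i)))"
    and evaluation: "is_evaluation \<iota> \<phi>"
    and master_lin: "master_linear \<phi>"
begin

abbreviation q :: 'b where
  "q \<equiv> \<iota> (monom 1 1)"

definition ev_deriv :: "('s, 'k) fsum \<Rightarrow> nat \<Rightarrow> 'b" where
  "ev_deriv X m = ev_fs \<iota> \<phi> ((qderiv_fs R KSO ^^ m) X)"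

definition ev_deriv_word :: "nat \<Rightarrow> 's word \<Rightarrow> 'b" where
  "ev_deriv_word m u = ev_deriv [(1, u)] m"

lemma ev_deriv_cong: "elt_of X = elt_of Y \<Longrightarrow> ev_deriv X m = ev_deriv Y m"
  unfolding ev_deriv_def evE_elt_of [OF evaluation, symmetric] qD_pow_elt_of [OF R_in_E, symmetric]
  by simp

lemma ev_deriv_Nil [simp]: "ev_deriv [] m = 0"
  by (simp add: ev_deriv_def)

lemma ev_deriv_append [simp]: "ev_deriv (X @ Y) m = ev_deriv X m + ev_deriv Y m"
  by (simp add: ev_deriv_def qderiv_fs_pow_append)

lemma ev_deriv_fs_scale [simp]: "ev_deriv (fs_scale k X) m = \<iota> k * ev_deriv X m"
  by (simp add: ev_deriv_def qderiv_fs_pow_fs_scale ev_fs_fs_scale [OF evaluation])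

lemma ev_deriv_Cons: "ev_deriv ((c, u) # X) m = \<iota> c * ev_deriv_word m u + ev_deriv X m"
proof -
  have "(c, u) # X = fs_scale c [(1, u)] @ X" by simp
  then show ?thesis by (simp only: ev_deriv_append ev_deriv_fs_scale ev_deriv_word_def)
qed

lemma ev_deriv_eq_sum_list: "ev_deriv X m = sum_list (map (\<lambda>(c, u). \<iota> c * ev_deriv_word m u) X)"
  by (induction X) (auto simp: ev_deriv_Cons)

lemma ev_deriv_fs_wrap:
  "ev_deriv (fs_wrap a b Z) m = sum_list (map (\<lambda>(c, z). \<iota> c * ev_deriv_word m (a @ z @ b)) Z)"
  by (simp add: ev_deriv_eq_sum_list fs_wrap_def split_def o_def)

lemma ev_deriv_word_0: "ev_deriv_word 0 u = ev_word \<phi> u"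
  by (simp add: ev_deriv_word_def ev_deriv_def is_evaluation_one [OF evaluation])

lemma ev_deriv_word_red: "ev_deriv_word m (red u) = ev_deriv_word m u"
  unfolding ev_deriv_word_def by (rule ev_deriv_cong) (simp add: fun_eq_iff elt_of_Cons)

lemma ev_deriv_word_Suc: "ev_deriv_word (Suc m) u = ev_deriv (deriv_word R u) m"
proof -
  have "ev_deriv_word (Suc m) u = ev_deriv (order_fs KSO (deriv_word R (red u))) m"
    by (simp add: ev_deriv_word_def ev_deriv_def funpow_Suc_right del: funpow.simps)
  also have "\<dots> = ev_deriv (deriv_word R u) m"
    by (rule ev_deriv_cong) (simp add: elt_of_order_fs_KSO elt_of_deriv_word_red)
  finally show ?thesis .
qed

lemma ev_deriv_word_map_up_l: "ev_deriv_word m (map up_l w) = q ^ m * ev_deriv_word m w"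
proof (induction m arbitrary: w)
  case 0
  show ?case by (simp add: ev_deriv_word_0 ev_word_map_up_l [OF master_lin])
next
  case (Suc m)
  have up: "ev_deriv (fs_up Z) m = q ^ m * ev_deriv Z m" for Z
    by (induction Z) (auto simp: ev_deriv_eq_sum_list fs_up_def Suc.IH algebra_simps)
  have "ev_deriv_word (Suc m) (map up_l w) = ev_deriv (fs_scale (monom 1 1) (fs_up (deriv_word R w))) m"
    unfolding ev_deriv_word_Suc
    by (rule ev_deriv_cong) (rule elt_of_deriv_word_map_up_l [OF R_in_E R_shift])
  then show ?case by (simp add: ev_deriv_word_Suc up)
qed

lemma ev_deriv_fs_wrap_sum:
  assumes "\<And>z. ev_deriv_word m (a @ z @ b) = (\<Sum>k\<in>A. F k * ev_deriv_word (g k) z)"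
  shows "ev_deriv (fs_wrap a b Z) m = (\<Sum>k\<in>A. F k * ev_deriv Z (g k))"
proof -
  have "ev_deriv (fs_wrap a b Z) m = sum_list (map (\<lambda>(c, z). \<iota> c * (\<Sum>k\<in>A. F k * ev_deriv_word (g k) z)) Z)"
    by (simp add: ev_deriv_fs_wrap assms)
  also have "\<dots> = (\<Sum>k\<in>A. F k * ev_deriv Z (g k))"
    unfolding sum_list_mult_sum_commute ev_deriv_eq_sum_list [of Z] ..
  finally show ?thesis .
qed

text \<open>D(u w) = D(u) up(w) + u D(w); the shift in the first term contributes the power of q
  that turns Pascal's rule into the q-Pascal rule.\<close>

lemma ev_deriv_word_append:
  "ev_deriv_word m (u @ w) = (\<Sum>k\<le>m. qbinom q m k * ev_deriv_word k u * ev_deriv_word (m - k) w)"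
proof (induction m arbitrary: u w)
  case 0
  show ?case by (simp add: ev_deriv_word_0 ev_word_def)
next
  case (Suc m)
  have "ev_deriv (fs_wrap [] (map up_l w) (deriv_word R u)) m
      = (\<Sum>k\<le>m. (qbinom q m k * ev_deriv_word (m - k) (map up_l w)) * ev_deriv (deriv_word R u) k)"
    by (rule ev_deriv_fs_wrap_sum) (simp add: Suc.IH ac_simps)
  moreover have "ev_deriv (fs_wrap u [] (deriv_word R w)) m
      = (\<Sum>k\<le>m. (qbinom q m k * ev_deriv_word k u) * ev_deriv (deriv_word R w) (m - k))"
    by (rule ev_deriv_fs_wrap_sum) (simp add: Suc.IH)
  ultimately show ?case
    using qbinom_convolution_Suc [of q m "\<lambda>k. ev_deriv_word k u" "\<lambda>k. ev_deriv_word k w"]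
    by (simp add: ev_deriv_word_Suc deriv_word_append ev_deriv_word_map_up_l ac_simps)
qed

lemma ev_deriv_word_append_commute: "ev_deriv_word m (u @ w) = ev_deriv_word m (w @ u)"
  unfolding ev_deriv_word_append by (rule qbinom_convolution_commute)

lemma ev_deriv_word_mset_eq: "mset u = mset u' \<Longrightarrow> ev_deriv_word m u = ev_deriv_word m u'"
proof (induction u arbitrary: u' m)
  case (Cons a w)
  have "a \<in> set u'" using Cons.prems by (metis list.set_intros(1) set_mset_mset)
  then obtain p s where u': "u' = p @ a # s" by (meson split_list)
  with Cons.prems have "mset w = mset (p @ s)" by simp
  have rotate: "ev_deriv_word j (a # s) = ev_deriv_word j (s @ [a])" for j
    using ev_deriv_word_append_commute [of j "[a]" s] by simp
  have "ev_deriv_word m u' = ev_deriv_word m (p @ s @ [a])"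
    unfolding u' ev_deriv_word_append [of m p] rotate by (simp only: ev_deriv_word_append [of m p, symmetric])
  also have "\<dots> = ev_deriv_word m ([a] @ p @ s)"
    using ev_deriv_word_append_commute [of m "p @ s" "[a]"] by simp
  also have "\<dots> = ev_deriv_word m ([a] @ w)"
    unfolding ev_deriv_word_append [of m "[a]"] Cons.IH [OF \<open>mset w = mset (p @ s)\<close>] ..
  finally show ?case by simp
qed simp

lemma ev_deriv_order_fs:
  assumes "is_order \<rho>"
  shows "ev_deriv (order_fs \<rho> Z) m = ev_deriv Z m"
proof -
  have "ev_deriv_word m (\<rho> (red u)) = ev_deriv_word m u" for u
  proof -
    have "mset (\<rho> (red u)) = mset (red u)"
      using assms by (simp add: is_order_def reduced_def)
    then show ?thesis by (metis ev_deriv_word_mset_eq ev_deriv_word_red)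
  qed
  then show ?thesis by (induction Z) (auto simp: order_fs_def ev_deriv_Cons)
qed

lemma ev_deriv_qderiv_fs: "is_order \<rho> \<Longrightarrow> ev_deriv (qderiv_fs R \<rho> Y) m = ev_deriv Y (Suc m)"
  by (induction Y) (auto simp: ev_deriv_Cons ev_deriv_order_fs ev_deriv_word_Suc [symmetric]
      ev_deriv_word_red)

lemma ev_deriv_qderiv_fs_pow: "is_order \<rho> \<Longrightarrow> ev_deriv ((qderiv_fs R \<rho> ^^ n) Y) m = ev_deriv Y (n + m)"
  by (induction n arbitrary: m) (simp_all add: ev_deriv_qderiv_fs)

lemma evE_qD_pow:
  assumes "is_order \<rho>" and "in_E f"
  shows "evE \<iota> \<phi> ((qD R \<rho> ^^ n) f) = ev_deriv (fs_of f) n"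
proof -
  have "evE \<iota> \<phi> ((qD R \<rho> ^^ n) f) = ev_deriv ((qderiv_fs R \<rho> ^^ n) (fs_of f)) 0"
    using assms(2)
    by (simp add: ev_deriv_def elt_of_fs_of qD_pow_elt_of [OF R_in_E, symmetric] evE_elt_of [OF evaluation, symmetric])
  then show ?thesis
    by (simp add: ev_deriv_qderiv_fs_pow [OF assms(1)])
qed

end

theorem proposition4p15:
  fixes R :: "'s \<times> nat \<Rightarrow> ('s, 'k::{comm_ring_1, ring_char_0}) elt"
    and \<rho> :: "'s word \<Rightarrow> 's word"
    and \<iota> :: "'k poly \<Rightarrow> 'b::comm_ring_1"
    and \<phi> :: "'s \<times> nat \<Rightarrow> 'b"
    and f :: "('s, 'k) elt"
  assumes "\<forall>x. in_E (R x)"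
    and "is_order \<rho>"
    and "\<forall>s i. R (s, Suc i) = smul (monom 1 1) (upE (R (s, i)))"
    and "is_evaluation \<iota> \<phi>"
    and "master_linear \<phi>"
    and "in_E f"
  shows "evGen \<iota> \<phi> (Gen R \<rho> f) = evGen \<iota> \<phi> (Gen R KSO f)"
proof -
  interpret shift_equivariant_evaluation R \<iota> \<phi>
    using assms by unfold_locales auto
  have "is_order KSO"
    by (simp add: is_order_def KSO_def)
  then have "evE \<iota> \<phi> ((qD R \<rho> ^^ n) f) = evE \<iota> \<phi> ((qD R KSO ^^ n) f)" for n
    using evE_qD_pow [OF assms(2,6)] evE_qD_pow [OF \<open>is_order KSO\<close> assms(6)] by simp
  then show ?thesis
    by (simp add: fun_eq_iff evGen_def Gen_def)
qed

end
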